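(* A responsive social choice function $f:\Theta\to Z$ satisfies strict event monotonicity if and only if it satisfies strict iterated-elimination monotonicity.
   Context: Setting: $\mathcal{I}$ is a finite set of agents with $|\mathcal{I}|\ge3$; $\Theta$ is a finite set of $n$ states; $Z$ is a countable set of pure outcomes; $Y=\Delta(Z)$ is the set of lotteries on $Z$, each $z\in Z$ identified with the degenerate lottery. Each agent $i$ has at each state $\theta$ a utility $u_i(\cdot,\theta):Z\to\mathbb{R}$, extended to $Y$ by expected utility $u_i(y,\theta)=\sum_z y_zu_i(z,\theta)$. An SCF is a map $f:\Theta\to Z$ (assumed throughout with $|f(\Theta)|\ge2$); it is responsive if it is injective. Active agents: $\mathcal{I}^{\theta}=\{i\in\mathcal{I}:\exists z\in Z,\ u_i(f(\theta),\theta)>u_i(z,\theta)\}$; for nonempty $E\subseteq\Theta$, $\mathcal{I}^E=\bigcap_{\theta\in E}\mathcal{I}^\theta$. Strict event monotonicity: for every $\theta'\in\Theta$ and nonempty $E\subseteq\Theta$, if for all $\theta\in E$, $y\in Y$, $i\in\mathcal{I}^E$ we have [$u_i(f(\theta),\theta)>u_i(y,\theta)\Rightarrow u_i(f(\theta),\theta')\ge u_i(y,\theta')$], then $f(E)=\{f(\theta')\}$. Strict iterated-elimination monotonicity: for every $\theta'\in\Theta$ there exists $(\theta^1,\dots,\theta^n)$ with $\{\theta^1,\dots,\theta^n\}=\Theta$ and $\theta^n=\theta'$ such that for every $k\in\{1,\dots,n-1\}$ there exist $y\in Y$ and $i\in\mathcal{I}^{\{\theta^k,\theta^{k+1},\dots,\theta^n\}}$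 with $u_i(f(\theta^k),\theta^k)>u_i(y,\theta^k)$ and $u_i(y,\theta')>u_i(f(\theta^k),\theta')$. *)

theory Defs
  imports "HOL-Probability.Probability_Mass_Function"
begin

text \<open>Agents: finite type 'i; states: finite type 's; pure outcomes: countable type 'z.
  u i z s is the utility of agent i for pure outcome z at state s.  Y is the set of lotteries for which every expected utility
  is well defined (integrable).\<close>

definition lotteries :: "('i \<Rightarrow> 'z \<Rightarrow> 's \<Rightarrow> real) \<Rightarrow> 'z pmf set" where
  "lotteries u = {y. \<forall>i s. integrable (measure_pmf y) (\<lambda>z. u i z s)}"

definition EU :: "('i \<Rightarrow> 'z \<Rightarrow> 's \<Rightarrow> real) \<Rightarrow> 'i \<Rightarrow> 'z pmf \<Rightarrow> 's \<Rightarrow> real" where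
  "EU u i y s = measure_pmf.expectation y (\<lambda>z. u i z s)"

definition active :: "('i \<Rightarrow> 'z \<Rightarrow> 's \<Rightarrow> real) \<Rightarrow> ('s \<Rightarrow> 'z) \<Rightarrow> 's \<Rightarrow> 'i set" where
  "active u f s = {i. \<exists>z. u i (f s) s > u i z s}"

definition active_event :: "('i \<Rightarrow> 'z \<Rightarrow> 's \<Rightarrow> real) \<Rightarrow> ('s \<Rightarrow> 'z) \<Rightarrow> 's set \<Rightarrow> 'i set" where
  "active_event u f E = (\<Inter>s\<in>E. active u f s)"

definition strict_event_monotone :: "('i \<Rightarrow> 'z \<Rightarrow> 's \<Rightarrow> real) \<Rightarrow> ('s \<Rightarrow> 'z) \<Rightarrow> bool" where
  "strict_event_monotone u f \<longleftrightarrow>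
    (\<forall>s' E. E \<noteq> {} \<longrightarrow>
      (\<forall>s\<in>E. \<forall>y\<in>lotteries u. \<forall>i\<in>active_event u f E.
          u i (f s) s > EU u i y s \<longrightarrow> u i (f s) s' \<ge> EU u i y s')
      \<longrightarrow> f ` E = {f s'})"

text \<open>The enumeration (theta^1,...,theta^n) is a list xs of length n = CARD('s), listing
  every state exactly once, with last element theta'.  Index k (1-based) corresponds to xs ! (k-1),
  and {theta^k,...,theta^n} = set (drop (k-1) xs).\<close>

definition strict_iterated_elimination_monotone ::
  "('i \<Rightarrow> 'z \<Rightarrow> 's::finite \<Rightarrow> real) \<Rightarrow> ('s \<Rightarrow> 'z) \<Rightarrow> bool" where
  "strict_iterated_elimination_monotone u f \<longleftrightarrow>
    (\<forall>s'. \<exists>xs. length xs = CARD('s) \<and> distinct xs \<and> set xs = UNIV \<and> last xs = s' \<and>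
      (\<forall>k < CARD('s) - 1. \<exists>y\<in>lotteries u. \<exists>i\<in>active_event u f (set (drop k xs)).
          u i (f (xs ! k)) (xs ! k) > EU u i y (xs ! k) \<and>
          EU u i y s' > u i (f (xs ! k)) s'))"

end

theory Submission
  imports Defs
begin

text \<open>Both conditions are about preference reversals: an agent active on an event \<open>E\<close> who
  prefers \<open>f s\<close> to some lottery at \<open>s\<close> but the lottery to \<open>f s\<close> at \<open>s'\<close>.  Event
  monotonicity demands a reversal at some \<open>s \<in> E\<close> for every event \<open>E\<close> on which \<open>f\<close> is not
  constantly \<open>f s'\<close>; iterated elimination demands an enumeration ending in \<open>s'\<close> in which each
  state has a reversal relative to the set of states not yet eliminated.  Given event
  monotonicity, repeatedly removing a reversal state builds such an enumeration (injectivity of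
  \<open>f\<close> keeps \<open>f\<close> non-constant on every remaining set other than \<open>{s'}\<close>).  Conversely, the first
  state of the enumeration in \<open>E - {s'}\<close> has a reversal relative to a superset of \<open>E\<close>, hence
  relative to \<open>E\<close>, since shrinking an event only enlarges its set of active agents.\<close>

definition preference_reversal ::
  "('i \<Rightarrow> 'z \<Rightarrow> 's \<Rightarrow> real) \<Rightarrow> ('s \<Rightarrow> 'z) \<Rightarrow> 's set \<Rightarrow> 's \<Rightarrow> 's \<Rightarrow> bool" where
  "preference_reversal u f E s s' \<longleftrightarrow>
    (\<exists>y\<in>lotteries u. \<exists>i\<in>active_event u f E.
       u i (f s) s > EU u i y s \<and> EU u i y s' > u i (f s) s')"

lemma active_event_antimono: "E \<subseteq> F \<Longrightarrow> active_event u f F \<subseteq> active_event u f E"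
  unfolding active_event_def by blast

lemma preference_reversal_antimono:
  "preference_reversal u f F s s' \<Longrightarrow> E \<subseteq> F \<Longrightarrow> preference_reversal u f E s s'"
  unfolding preference_reversal_def using active_event_antimono[of E F u f] by blast

lemma preference_reversal_neq: "preference_reversal u f E s s' \<Longrightarrow> s \<noteq> s'"
  unfolding preference_reversal_def by force

lemma strict_event_monotone_iff_reversal:
  "strict_event_monotone u f \<longleftrightarrow>
    (\<forall>s' E. E \<noteq> {} \<longrightarrow> f ` E \<noteq> {f s'} \<longrightarrow> (\<exists>s\<in>E. preference_reversal u f E s s'))"
  unfolding strict_event_monotone_def preference_reversal_def by (meson not_le)

inductive elimination_order ::
  "('i \<Rightarrow> 'z \<Rightarrow> 's \<Rightarrow> real) \<Rightarrow> ('s \<Rightarrow> 'z) \<Rightarrow> 's \<Rightarrow> 's list \<Rightarrow> bool"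
  for u f s' where
  Nil: "elimination_order u f s' [s']"
| Cons: "preference_reversal u f (insert s (set xs)) s s' \<Longrightarrow> s \<notin> set xs \<Longrightarrow>
    elimination_order u f s' xs \<Longrightarrow> elimination_order u f s' (s # xs)"

lemma elimination_order_iff_nth:
  "elimination_order u f s' xs \<longleftrightarrow>
    xs \<noteq> [] \<and> distinct xs \<and> last xs = s' \<and>
    (\<forall>k < length xs - 1. preference_reversal u f (set (drop k xs)) (xs ! k) s')"
proof
  show "elimination_order u f s' xs \<Longrightarrow> xs \<noteq> [] \<and> distinct xs \<and> last xs = s' \<and>
    (\<forall>k < length xs - 1. preference_reversal u f (set (drop k xs)) (xs ! k) s')"
  proof (induction rule: elimination_order.induct)
    case (Cons s xs)
    have "preference_reversal u f (set (drop k (s # xs))) ((s # xs) ! k) s'"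
      if "k < length xs" for k
      using Cons that by (cases k) (auto simp: insert_absorb)
    with Cons show ?case by simp
  qed simp
next
  show "xs \<noteq> [] \<and> distinct xs \<and> last xs = s' \<and>
    (\<forall>k < length xs - 1. preference_reversal u f (set (drop k xs)) (xs ! k) s') \<Longrightarrow>
    elimination_order u f s' xs"
  proof (induction xs)
    case (Cons s xs)
    show ?case
    proof (cases "xs = []")
      case True
      then show ?thesis using Cons.prems by (simp add: elimination_order.Nil)
    next
      case False
      have reversal: "preference_reversal u f (set (drop k (s # xs))) ((s # xs) ! k) s'"
        if "k < length xs" for k
        using Cons.prems that by simp
      have "preference_reversal u f (set (drop k xs)) (xs ! k) s'"
        if "k < length xs - 1" for k
        using reversal[of "Suc k"] that by simp
      with False Cons.prems Cons.IH show ?thesis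
        using reversal[of 0] by (auto intro!: elimination_order.Cons)
    qed
  qed simp
qed

lemma strict_iterated_elimination_monotone_iff_order:
  fixes u :: "'i \<Rightarrow> 'z \<Rightarrow> 's::finite \<Rightarrow> real"
  shows "strict_iterated_elimination_monotone u f \<longleftrightarrow>
    (\<forall>s'. \<exists>xs. set xs = UNIV \<and> elimination_order u f s' xs)"
proof -
  have len: "length xs = CARD('s)" if "distinct xs" "set xs = UNIV" for xs :: "'s list"
    using distinct_card[OF that(1)] that(2) by simp
  have enumeration_iff:
    "(length xs = CARD('s) \<and> distinct xs \<and> set xs = UNIV \<and> last xs = s' \<and>
        (\<forall>k < CARD('s) - 1. P k)) \<longleftrightarrow>
     (set xs = UNIV \<and> xs \<noteq> [] \<and> distinct xs \<and> last xs = s' \<and> (\<forall>k < length xs - 1. P k))"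
    for xs :: "'s list" and s' P
  proof (cases "distinct xs \<and> set xs = UNIV")
    case True
    then have "length xs = CARD('s)" "xs \<noteq> []"
      using len by auto
    with True show ?thesis by simp
  qed blast
  show ?thesis
    unfolding strict_iterated_elimination_monotone_def elimination_order_iff_nth
      preference_reversal_def
    by (simp only: enumeration_iff)
qed

lemma elimination_order_exists:
  assumes sem: "strict_event_monotone u f" and "inj_on f E" "finite E" "s' \<in> E"
  shows "\<exists>xs. set xs = E \<and> elimination_order u f s' xs"
  using \<open>finite E\<close> \<open>inj_on f E\<close> \<open>s' \<in> E\<close>
proof (induction "card E" arbitrary: E rule: less_induct)
  case less
  show ?case
  proof (cases "E = {s'}")
    case True
    then show ?thesis by (intro exI[of _ "[s']"]) (simp add: elimination_order.Nil)
  next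
    case False
    have "f ` E \<noteq> {f s'}"
    proof
      assume "f ` E = {f s'}"
      then have "t = s'" if "t \<in> E" for t
        using that less.prems(2,3) inj_onD[of f E t s'] by blast
      with False less.prems(3) show False by blast
    qed
    then obtain s where s: "s \<in> E" "preference_reversal u f E s s'"
      using sem less.prems(3) unfolding strict_event_monotone_iff_reversal by blast
    have "s' \<in> E - {s}"
      using preference_reversal_neq[OF s(2)] less.prems(3) by blast
    then obtain xs where xs: "set xs = E - {s}" "elimination_order u f s' xs"
      using less.hyps[OF card_Diff1_less[OF less.prems(1) s(1)] finite_Diff[OF less.prems(1)]
          inj_on_diff[OF less.prems(2)]]
      by blast
    have E: "insert s (set xs) = E"
      using xs(1) s(1) by blast
    have "elimination_order u f s' (s # xs)"
      by (rule elimination_order.Cons) (use E s(2) xs in simp_all)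
    then show ?thesis
      using E by (intro exI[of _ "s # xs"]) simp
  qed
qed

lemma elimination_order_reversal:
  assumes "elimination_order u f s' xs" "E \<subseteq> set xs" "\<not> E \<subseteq> {s'}"
  shows "\<exists>s\<in>E. preference_reversal u f E s s'"
  using assms
proof (induction arbitrary: E rule: elimination_order.induct)
  case (Cons s xs)
  show ?case
  proof (cases "s \<in> E")
    case True
    have "preference_reversal u f E s s'"
      using preference_reversal_antimono[OF Cons.hyps(1)] Cons.prems(1) by simp
    with True show ?thesis ..
  next
    case False
    then have "E \<subseteq> set xs"
      using Cons.prems(1) by auto
    with Cons.IH Cons.prems(2) show ?thesis by blast
  qed
qed simp

theorem proposition1:
  fixes u :: "'i::finite \<Rightarrow> 'z::countable \<Rightarrow> 's::finite \<Rightarrow> real"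
    and f :: "'s \<Rightarrow> 'z"
  assumes "CARD('i) \<ge> 3"
    and "card (range f) \<ge> 2"
    and "inj f"
  shows "strict_event_monotone u f \<longleftrightarrow> strict_iterated_elimination_monotone u f"
proof
  assume sem: "strict_event_monotone u f"
  have "\<exists>xs. set xs = UNIV \<and> elimination_order u f s' xs" for s'
    using elimination_order_exists[OF sem \<open>inj f\<close> finite_class.finite_UNIV UNIV_I] .
  then show "strict_iterated_elimination_monotone u f"
    unfolding strict_iterated_elimination_monotone_iff_order ..
next
  assume "strict_iterated_elimination_monotone u f"
  then have orders: "\<exists>xs. set xs = UNIV \<and> elimination_order u f s' xs" for s'
    unfolding strict_iterated_elimination_monotone_iff_order ..
  show "strict_event_monotone u f"
    unfolding strict_event_monotone_iff_reversal
  proof (intro allI impI)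
    fix s' E
    assume "E \<noteq> {}" "f ` E \<noteq> {f s'}"
    then have "\<not> E \<subseteq> {s'}" by blast
    moreover obtain xs where "set xs = UNIV" "elimination_order u f s' xs"
      using orders by blast
    ultimately show "\<exists>s\<in>E. preference_reversal u f E s s'"
      using elimination_order_reversal[of u f s' xs E] by blast
  qed
qed

end
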